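(* Let $\gamma>0$, $0<q<1$, and for $\lambda\ge0$ define $f_\lambda(x;\mu)=d(x;\mu)-I(\mu)-\lambda(x^2-\gamma)$. Then $\mu_0\in\Lambda(\gamma,q)$ maximizes $I(\mu)$ over $\Lambda(\gamma,q)$ if and only if there exists $\lambda\ge0$ such that $\lambda\,\mathbb{E}_{\mu_0}[X^2-\gamma]=0$ and $\mathbb{E}_\mu[f_\lambda(X;\mu_0)]\le0$ for all $\mu\in\Lambda(q)$.
   Context: $\phi(t)=\frac{1}{\sqrt{2\pi}}e^{-t^2/2}$; $p_Y(y;\mu)=\mathbb{E}_\mu[\phi(y-X)]$; $d(x;\mu)=\int\phi(y-x)\log\frac{\phi(y-x)}{p_Y(y;\mu)}dy$; $I(\mu)=\int d(x;\mu)\mu(dx)$. $\Lambda(\gamma,q)=\{\mu:\mu(\{0\})\ge q,\ \mathbb{E}_\mu[X^2]\le\gamma\}$ and $\Lambda(q)=\bigcup_{0\le\gamma<\infty}\Lambda(\gamma,q)$. *)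

theory Defs
  imports "HOL-Probability.Probability"
begin

definition phi :: "real \<Rightarrow> real" where
  "phi t = exp (- (t\<^sup>2) / 2) / sqrt (2 * pi)"

definition real_prob :: "real measure \<Rightarrow> bool" where
  "real_prob \<mu> \<longleftrightarrow> prob_space \<mu> \<and> sets \<mu> = sets borel"

definition pY :: "real \<Rightarrow> real measure \<Rightarrow> real" where
  "pY y \<mu> = (\<integral>x. phi (y - x) \<partial>\<mu>)"

definition dfun :: "real \<Rightarrow> real measure \<Rightarrow> real" where
  "dfun x \<mu> = (\<integral>y. phi (y - x) * ln (phi (y - x) / pY y \<mu>) \<partial>lborel)"

definition Ifun :: "real measure \<Rightarrow> real" where
  "Ifun \<mu> = (\<integral>x. dfun x \<mu> \<partial>\<mu>)"

definition Lambda :: "real \<Rightarrow> real \<Rightarrow> real measure set" where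
  "Lambda \<gamma> q = {\<mu>. real_prob \<mu> \<and> measure \<mu> {0} \<ge> q \<and>
                     (\<integral>\<^sup>+ x. ennreal (x\<^sup>2) \<partial>\<mu>) \<le> ennreal \<gamma>}"

definition Lambda_q :: "real \<Rightarrow> real measure set" where
  "Lambda_q q = (\<Union>\<gamma>\<in>{0..}. Lambda \<gamma> q)"

definition f_lam :: "real \<Rightarrow> real \<Rightarrow> real \<Rightarrow> real measure \<Rightarrow> real" where
  "f_lam lam \<gamma> x \<mu> = dfun x \<mu> - Ifun \<mu> - lam * (x\<^sup>2 - \<gamma>)"

end

theory Submission
  imports Defs
begin

text \<open>
  Write \<open>p\<^sub>\<mu>\<close> for the output density \<open>pY \<cdot> \<mu>\<close>. Then \<open>I(\<mu>) = h(p\<^sub>\<mu>) - h(\<phi>)\<close> and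
  \<open>\<integral> d(x;\<mu>\<^sub>0) d\<mu> = -\<integral> p\<^sub>\<mu> ln p\<^sub>\<mu>\<^sub>0 - h(\<phi>)\<close>, which is affine in \<open>\<mu>\<close> and, by Gibbs'
  inequality, dominates \<open>I(\<mu>)\<close>, with equality at \<open>\<mu> = \<mu>\<^sub>0\<close>; this gives sufficiency of the
  condition. For necessity, differentiating \<open>I\<close> at \<open>t = 0\<close> along the mixtures
  \<open>(1 - t) \<mu>\<^sub>0 + t \<mu>\<close> (by dominated convergence) shows that
  \<open>a(\<mu>) = \<integral> d(x;\<mu>\<^sub>0) d\<mu> - I(\<mu>\<^sub>0)\<close> is nonpositive whenever these mixtures are feasible for
  small \<open>t\<close>. Both \<open>a\<close> and the constraint \<open>g(\<mu>) = E\<^sub>\<mu>[X\<^sup>2] - \<gamma>\<close> are affine along mixtures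
  and the point mass at \<open>0\<close> is strictly feasible, so an elementary separation argument in the
  plane of values \<open>(g(\<mu>), a(\<mu>))\<close> produces the multiplier \<open>\<lambda>\<close>.
\<close>

section \<open>Lagrange multipliers for an affine constraint\<close>

text \<open>\<open>x0\<close> satisfies the first-order condition for maximising, over the convex set \<open>C\<close> and
  subject to the affine constraint \<open>g \<le> 0\<close>, a functional whose directional derivative at \<open>x0\<close>
  towards \<open>x\<close> is \<open>a x\<close>.\<close>

locale first_order_optimal =
  fixes C :: "'m set" and mix :: "real \<Rightarrow> 'm \<Rightarrow> 'm \<Rightarrow> 'm" and a g :: "'m \<Rightarrow> real" and x0 :: 'm
  assumes mix_in: "\<And>t x y. x \<in> C \<Longrightarrow> y \<in> C \<Longrightarrow> 0 \<le> t \<Longrightarrow> t \<le> 1 \<Longrightarrow> mix t x y \<in> C"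
    and a_mix: "\<And>t x y. x \<in> C \<Longrightarrow> y \<in> C \<Longrightarrow> 0 \<le> t \<Longrightarrow> t \<le> 1 \<Longrightarrow>
      a (mix t x y) = (1 - t) * a x + t * a y"
    and g_mix: "\<And>t x y. x \<in> C \<Longrightarrow> y \<in> C \<Longrightarrow> 0 \<le> t \<Longrightarrow> t \<le> 1 \<Longrightarrow>
      g (mix t x y) = (1 - t) * g x + t * g y"
    and x0_in: "x0 \<in> C" and x0_feasible: "g x0 \<le> 0"
    and local_nonpos: "\<And>x \<epsilon>. x \<in> C \<Longrightarrow> 0 < \<epsilon> \<Longrightarrow> \<epsilon> \<le> 1 \<Longrightarrow>
      (\<And>t. 0 < t \<Longrightarrow> t \<le> \<epsilon> \<Longrightarrow> g (mix t x0 x) \<le> 0) \<Longrightarrow> a x \<le> 0"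
begin

lemma nonpos_if_feasible:
  assumes "x \<in> C" "g x \<le> 0" shows "a x \<le> 0"
proof (rule local_nonpos[OF assms(1), of 1])
  fix t :: real assume "0 < t" "t \<le> 1"
  then show "g (mix t x0 x) \<le> 0"
    using g_mix[OF x0_in assms(1), of t] x0_feasible assms(2)
    by (simp add: add_nonpos_nonpos mult_nonneg_nonpos)
qed simp_all

lemma nonpos_if_x0_strictly_feasible:
  assumes "g x0 < 0" "x \<in> C" shows "a x \<le> 0"
proof -
  define \<epsilon> where "\<epsilon> = - g x0 / (\<bar>g x\<bar> - g x0)"
  have den: "0 < \<bar>g x\<bar> - g x0" using assms(1) by simp
  show ?thesis
  proof (rule local_nonpos[OF assms(2), of \<epsilon>])
    show "0 < \<epsilon>" "\<epsilon> \<le> 1" unfolding \<epsilon>_def using assms(1) den by (auto simp: divide_simps)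
    fix t assume t: "0 < t" "t \<le> \<epsilon>"
    have "g (mix t x0 x) = g x0 + t * g x - t * g x0"
      using g_mix[OF x0_in assms(2), of t] t \<open>\<epsilon> \<le> 1\<close> by (simp add: algebra_simps)
    also have "\<dots> \<le> g x0 + t * (\<bar>g x\<bar> - g x0)"
      using t by (simp add: right_diff_distrib mult_left_mono)
    also have "\<dots> \<le> g x0 + \<epsilon> * (\<bar>g x\<bar> - g x0)"
      using t den by (simp add: mult_right_mono)
    also have "\<dots> = 0" unfolding \<epsilon>_def using den by simp
    finally show "g (mix t x0 x) \<le> 0" .
  qed
qed

text \<open>Mixing \<open>x1\<close> and \<open>x2\<close> so that the constraint becomes active yields a feasible point.\<close>

lemma ratio_le:
  assumes x1: "x1 \<in> C" "0 < g x1" and x2: "x2 \<in> C" "g x2 < 0"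
  shows "a x1 / g x1 \<le> a x2 / g x2"
proof -
  define s where "s = g x1 / (g x1 - g x2)"
  have s: "0 \<le> s" "s \<le> 1" unfolding s_def using x1 x2 by (auto simp: divide_simps)
  have "g (mix s x1 x2) = 0"
    using g_mix[OF x1(1) x2(1) s] x1 x2 by (simp add: s_def field_simps)
  then have "(1 - s) * a x1 + s * a x2 \<le> 0"
    using nonpos_if_feasible[OF mix_in[OF x1(1) x2(1) s]] a_mix[OF x1(1) x2(1) s] by simp
  then have "(g x1 - g x2) * ((1 - s) * a x1 + s * a x2) \<le> 0"
    using x1 x2 by (simp add: mult_nonneg_nonpos)
  moreover have "(g x1 - g x2) * ((1 - s) * a x1 + s * a x2) = g x1 * a x2 - g x2 * a x1"
  proof -
    have "(g x1 - g x2) * (1 - s) = - g x2" "(g x1 - g x2) * s = g x1"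
      using x1 x2 by (simp_all add: s_def field_simps)
    moreover have "(g x1 - g x2) * ((1 - s) * a x1 + s * a x2) =
        ((g x1 - g x2) * (1 - s)) * a x1 + ((g x1 - g x2) * s) * a x2"
      by (simp add: algebra_simps)
    ultimately show ?thesis by simp
  qed
  ultimately show ?thesis
    using x1 x2 by (simp add: divide_simps mult.commute)
qed

theorem Lagrange_multiplier_exists:
  assumes Slater: "\<delta> \<in> C" "g \<delta> < 0"
  shows "\<exists>lam\<ge>0. lam * g x0 = 0 \<and> (\<forall>x\<in>C. a x \<le> lam * g x)"
proof (cases "g x0 < 0")
  case True
  then show ?thesis using nonpos_if_x0_strictly_feasible by (intro exI[of _ 0]) auto
next
  case False
  then have active: "g x0 = 0" using x0_feasible by simp
  define S where "S = insert 0 {a x / g x | x. x \<in> C \<and> 0 < g x}"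
  have bdd: "bdd_above S"
    unfolding S_def bdd_above_def using ratio_le[OF _ _ Slater]
    by (intro exI[of _ "max 0 (a \<delta> / g \<delta>)"]) (auto intro: order_trans[OF _ max.cobounded2])
  have "a x \<le> Sup S * g x" if x: "x \<in> C" for x
  proof (cases "0 < g x")
    case True
    then have "a x / g x \<le> Sup S" using bdd x by (intro cSup_upper) (auto simp: S_def)
    then show ?thesis using True by (simp add: divide_simps)
  next
    case False
    show ?thesis
    proof (cases "g x = 0")
      case True
      then show ?thesis using nonpos_if_feasible x by simp
    next
      case False
      then have neg: "g x < 0" using \<open>\<not> 0 < g x\<close> by simp
      have "Sup S \<le> a x / g x"
      proof (rule cSup_least)
        fix r assume "r \<in> S"
        then show "r \<le> a x / g x"
          using ratio_le[OF _ _ x neg] nonpos_if_feasible[OF x] neg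
          by (auto simp: S_def divide_nonpos_neg)
      qed (simp add: S_def)
      then show ?thesis using neg by (simp add: divide_simps mult.commute)
    qed
  qed
  moreover have "0 \<le> Sup S" using bdd by (intro cSup_upper) (auto simp: S_def)
  ultimately show ?thesis using active by (intro exI[of _ "Sup S"]) auto
qed

end

section \<open>Mixtures of probability measures\<close>

definition mixture :: "real \<Rightarrow> 'a measure \<Rightarrow> 'a measure \<Rightarrow> 'a measure" where
  "mixture t \<mu> \<nu> = measure_pmf (bernoulli_pmf t) \<bind> (\<lambda>b. if b then \<nu> else \<mu>)"

context
  fixes t :: real and \<mu> \<nu> :: "'a measure"
  assumes \<mu>: "prob_space \<mu>" and \<nu>: "prob_space \<nu>" and sets_eq: "sets \<nu> = sets \<mu>"
    and t: "0 \<le> t" "t \<le> 1"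
begin

lemma mixture_kernel_measurable:
  "(\<lambda>b. if b then \<nu> else \<mu>) \<in> measurable (measure_pmf (bernoulli_pmf t)) (subprob_algebra \<mu>)"
  using \<mu> \<nu> sets_eq by (auto simp: space_subprob_algebra prob_space_imp_subprob_space)

lemma sets_mixture: "sets (mixture t \<mu> \<nu>) = sets \<mu>"
  unfolding mixture_def using sets_eq by (intro sets_bind) auto

lemma nn_integral_mixture:
  assumes "f \<in> borel_measurable \<mu>"
  shows "(\<integral>\<^sup>+x. f x \<partial>mixture t \<mu> \<nu>) = ennreal (1 - t) * (\<integral>\<^sup>+x. f x \<partial>\<mu>) + ennreal t * (\<integral>\<^sup>+x. f x \<partial>\<nu>)"
  unfolding mixture_def nn_integral_bind[OF assms mixture_kernel_measurable]
  using t by (simp add: nn_integral_bernoulli_pmf mult.commute add.commute)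

lemma prob_space_mixture: "prob_space (mixture t \<mu> \<nu>)"
proof
  have "space (mixture t \<mu> \<nu>) = space \<mu>" "space \<nu> = space \<mu>"
    using sets_eq_imp_space_eq[OF sets_mixture] sets_eq_imp_space_eq[OF sets_eq] by simp_all
  then show "emeasure (mixture t \<mu> \<nu>) (space (mixture t \<mu> \<nu>)) = 1"
    using nn_integral_mixture[of "\<lambda>_. 1"] t prob_space.emeasure_space_1[OF \<mu>]
      prob_space.emeasure_space_1[OF \<nu>]
    by (simp add: ennreal_plus[symmetric] del: ennreal_plus)
qed

lemma measure_mixture:
  assumes "A \<in> sets \<mu>"
  shows "measure (mixture t \<mu> \<nu>) A = (1 - t) * measure \<mu> A + t * measure \<nu> A"
proof -
  interpret \<mu>: prob_space \<mu> by (rule \<mu>)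
  interpret \<nu>: prob_space \<nu> by (rule \<nu>)
  have "emeasure (mixture t \<mu> \<nu>) A = ennreal (1 - t) * emeasure \<mu> A + ennreal t * emeasure \<nu> A"
    using nn_integral_mixture[of "indicator A"] assms sets_eq sets_mixture by simp
  then show ?thesis using t \<mu>.emeasure_eq_measure \<nu>.emeasure_eq_measure
    by (intro measure_eq_emeasure_eq_ennreal) (simp_all add: ennreal_mult[symmetric] ennreal_plus[symmetric] del: ennreal_plus)
qed

lemma
  fixes f :: "'a \<Rightarrow> real"
  assumes f: "integrable \<mu> f" "integrable \<nu> f"
  shows integrable_mixture: "integrable (mixture t \<mu> \<nu>) f"
    and integral_mixture: "(\<integral>x. f x \<partial>mixture t \<mu> \<nu>) = (1 - t) * (\<integral>x. f x \<partial>\<mu>) + t * (\<integral>x. f x \<partial>\<nu>)"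
proof -
  have [measurable]: "f \<in> borel_measurable \<mu>" using f(1) by simp
  have measurable_mixture: "g \<in> borel_measurable (mixture t \<mu> \<nu>)" if "g \<in> borel_measurable \<mu>" for g :: "'a \<Rightarrow> real"
    using that sets_mixture measurable_cong_sets by blast
  have finite: "(\<integral>\<^sup>+x. ennreal (h x) \<partial>\<mu>) < \<infinity>" "(\<integral>\<^sup>+x. ennreal (h x) \<partial>\<nu>) < \<infinity>"
    if "integrable \<mu> h" "integrable \<nu> h" for h :: "'a \<Rightarrow> real"
  proof -
    have "(\<integral>\<^sup>+x. ennreal (h x) \<partial>M) \<le> (\<integral>\<^sup>+x. ennreal (norm (h x)) \<partial>M)" for M
      by (intro nn_integral_mono ennreal_leI) simp
    then show "(\<integral>\<^sup>+x. ennreal (h x) \<partial>\<mu>) < \<infinity>" "(\<integral>\<^sup>+x. ennreal (h x) \<partial>\<nu>) < \<infinity>"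
      using that by (auto simp: integrable_iff_bounded intro: le_less_trans)
  qed
  have split: "enn2real (\<integral>\<^sup>+x. ennreal (h x) \<partial>mixture t \<mu> \<nu>) =
      (1 - t) * enn2real (\<integral>\<^sup>+x. ennreal (h x) \<partial>\<mu>) + t * enn2real (\<integral>\<^sup>+x. ennreal (h x) \<partial>\<nu>)"
    if "integrable \<mu> h" "integrable \<nu> h" for h :: "'a \<Rightarrow> real"
    using finite[OF that] t that(1)
    by (simp add: nn_integral_mixture enn2real_plus enn2real_mult ennreal_mult_less_top)
  have "(\<integral>\<^sup>+x. norm (f x) \<partial>mixture t \<mu> \<nu>) < \<infinity>"
    using finite[of "\<lambda>x. norm (f x)"] f by (simp add: nn_integral_mixture ennreal_mult_less_top)
  then show I: "integrable (mixture t \<mu> \<nu>) f"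
    by (simp add: integrable_iff_bounded measurable_mixture)
  show "(\<integral>x. f x \<partial>mixture t \<mu> \<nu>) = (1 - t) * (\<integral>x. f x \<partial>\<mu>) + t * (\<integral>x. f x \<partial>\<nu>)"
    using split[of f] split[of "\<lambda>x. - f x"] f
    by (simp add: real_lebesgue_integral_def[OF I] real_lebesgue_integral_def[OF f(1)]
        real_lebesgue_integral_def[OF f(2)] algebra_simps)
qed

end

text \<open>The integrand of the relative entropy of \<open>(1 - t) P + t Q\<close> with respect to \<open>P\<close>, where
  \<open>a\<close> and \<open>b\<close> are the densities of \<open>P\<close> and \<open>Q\<close>.\<close>

definition mix_rel_entropy :: "real \<Rightarrow> real \<Rightarrow> real \<Rightarrow> real" where
  "mix_rel_entropy a b t = ((1 - t) * a + t * b) * (ln ((1 - t) * a + t * b) - ln a)"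

lemma mix_pos:
  fixes a b t :: real
  assumes "0 < a" "0 < b" "0 \<le> t" "t \<le> 1"
  shows "0 < (1 - t) * a + t * b"
proof (cases "t = 0")
  case False
  then show ?thesis using assms by (intro add_nonneg_pos) simp_all
qed (simp add: assms)

lemma mix_rel_entropy_lower:
  assumes "0 < a" "0 < b" "0 \<le> t" "t \<le> 1"
  shows "t * (b - a) \<le> mix_rel_entropy a b t"
proof -
  define z where "z = (1 - t) * a + t * b"
  have z: "0 < z" unfolding z_def using mix_pos assms by blast
  have "z * (1 - a / z) \<le> z * (ln z - ln a)"
    using ln_le_minus_one[of "a / z"] assms z by (intro mult_left_mono) (simp_all add: ln_div)
  moreover have "z * (1 - a / z) = t * (b - a)"
    using z by (simp add: z_def field_simps)
  ultimately show ?thesis by (simp add: mix_rel_entropy_def z_def)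
qed

text \<open>Convexity of \<open>t \<mapsto> mix_rel_entropy a b t\<close>, which vanishes at \<open>t = 0\<close>.\<close>

lemma mix_rel_entropy_upper:
  assumes "0 < a" "0 < b" "0 \<le> t" "t \<le> 1"
  shows "mix_rel_entropy a b t \<le> t * (b * (ln b - ln a))"
proof -
  define z where "z = (1 - t) * a + t * b"
  have z: "0 < z" unfolding z_def using mix_pos assms by blast
  define w where "w = t * b / z"
  have w: "0 \<le> w" "w \<le> 1"
    unfolding w_def using assms z by (auto simp: z_def divide_simps)
  have "(1 - w) *\<^sub>R 1 + w *\<^sub>R (a / b) = (z - t * b) / z + t * a / z"
    unfolding w_def using z assms by (simp add: field_simps)
  also have "\<dots> = ((z - t * b) + t * a) / z"
    by (simp add: add_divide_distrib)
  also have "\<dots> = a / z"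
    by (simp add: z_def algebra_simps)
  finally have "(1 - w) *\<^sub>R 1 + w *\<^sub>R (a / b) = a / z" .
  then have "w * ln (a / b) \<le> ln (a / z)"
    using concave_onD[OF ln_concave, of w 1 "a / b"] w assms by simp
  then have "z * (w * (ln a - ln b)) \<le> z * (ln a - ln z)"
    using assms z by (intro mult_left_mono) (simp_all add: ln_div)
  moreover have "z * w = t * b" unfolding w_def using z by simp
  ultimately have "t * b * (ln a - ln b) \<le> z * (ln a - ln z)"
    by (simp add: mult.assoc[symmetric])
  then show ?thesis
    unfolding mix_rel_entropy_def z_def[symmetric] by (simp add: algebra_simps)
qed

lemma mix_rel_entropy_has_real_derivative:
  assumes "0 < a"
  shows "(mix_rel_entropy a b has_real_derivative (b - a)) (at 0)"
proof -
  have "(mix_rel_entropy a b has_real_derivative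
      ((b - a) * (ln ((1 - 0) * a + 0 * b) - ln a) + ((1 - 0) * a + 0 * b) * ((b - a) / ((1 - 0) * a + 0 * b))))
      (at 0)"
    unfolding mix_rel_entropy_def[abs_def] using assms by (auto intro!: derivative_eq_intros)
  then show ?thesis using assms by simp
qed

lemma tendsto_integral_mix_rel_entropy_quotient:
  fixes p0 p1 :: "'a \<Rightarrow> real" and t :: "nat \<Rightarrow> real"
  assumes pos: "\<And>y. 0 < p0 y" "\<And>y. 0 < p1 y"
    and integrable: "integrable M p0" "integrable M p1" "integrable M (\<lambda>y. p1 y * (ln (p1 y) - ln (p0 y)))"
    and t: "\<And>n. 0 < t n" "\<And>n. t n \<le> 1" "t \<longlonglongrightarrow> 0"
  shows "(\<lambda>n. \<integral>y. mix_rel_entropy (p0 y) (p1 y) (t n) / t n \<partial>M) \<longlonglongrightarrow> (\<integral>y. p1 y - p0 y \<partial>M)"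
proof (rule integral_dominated_convergence
    [where w="\<lambda>y. \<bar>p1 y - p0 y\<bar> + \<bar>p1 y * (ln (p1 y) - ln (p0 y))\<bar>"])
  have [measurable]: "p0 \<in> borel_measurable M" "p1 \<in> borel_measurable M"
    using integrable by simp_all
  show "(\<lambda>y. p1 y - p0 y) \<in> borel_measurable M" by measurable
  show "(\<lambda>y. mix_rel_entropy (p0 y) (p1 y) (t n) / t n) \<in> borel_measurable M" for n
    unfolding mix_rel_entropy_def by measurable
  show "integrable M (\<lambda>y. \<bar>p1 y - p0 y\<bar> + \<bar>p1 y * (ln (p1 y) - ln (p0 y))\<bar>)"
    using integrable by auto
  have t_at_0: "filterlim t (at 0) sequentially"
    using t by (auto simp: filterlim_at less_imp_neq[symmetric] intro!: always_eventually)
  have "((\<lambda>h. (mix_rel_entropy (p0 y) (p1 y) h - mix_rel_entropy (p0 y) (p1 y) 0) / h) \<longlongrightarrow> p1 y - p0 y) (at 0)"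
    for y using mix_rel_entropy_has_real_derivative[OF pos(1)] by (simp add: DERIV_def)
  then have "(\<lambda>n. (mix_rel_entropy (p0 y) (p1 y) (t n) - mix_rel_entropy (p0 y) (p1 y) 0) / t n)
      \<longlonglongrightarrow> p1 y - p0 y" for y
    by (rule filterlim_compose[OF _ t_at_0])
  then show "AE y in M. (\<lambda>n. mix_rel_entropy (p0 y) (p1 y) (t n) / t n) \<longlonglongrightarrow> p1 y - p0 y"
    by (simp add: mix_rel_entropy_def)
  show "AE y in M. norm (mix_rel_entropy (p0 y) (p1 y) (t n) / t n)
      \<le> \<bar>p1 y - p0 y\<bar> + \<bar>p1 y * (ln (p1 y) - ln (p0 y))\<bar>" for n
  proof (intro AE_I2)
    fix y
    have "p1 y - p0 y \<le> mix_rel_entropy (p0 y) (p1 y) (t n) / t n"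
      "mix_rel_entropy (p0 y) (p1 y) (t n) / t n \<le> p1 y * (ln (p1 y) - ln (p0 y))"
      using mix_rel_entropy_lower[OF pos, of "t n"] mix_rel_entropy_upper[OF pos, of "t n"] t(1,2)[of n]
      by (simp_all add: field_simps)
    then show "norm (mix_rel_entropy (p0 y) (p1 y) (t n) / t n)
        \<le> \<bar>p1 y - p0 y\<bar> + \<bar>p1 y * (ln (p1 y) - ln (p0 y))\<bar>"
      by simp
  qed
qed

section \<open>The Gaussian channel\<close>

lemma phi_eq_std_normal_density: "phi = std_normal_density"
  unfolding phi_def[abs_def] std_normal_density_def by simp

lemma phi_pos: "0 < phi t"
  by (simp add: phi_eq_std_normal_density normal_density_pos)

lemma phi_le: "phi t \<le> 1 / sqrt (2 * pi)"
  unfolding phi_def by (simp add: divide_right_mono)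

lemma borel_measurable_phi [measurable]: "phi \<in> borel_measurable borel"
  unfolding phi_def by measurable

lemma ln_phi: "ln (phi t) = - t\<^sup>2 / 2 - ln (sqrt (2 * pi))"
  unfolding phi_def by (simp add: ln_div)

lemma lborel_integral_shift:
  fixes f :: "real \<Rightarrow> real"
  shows "(\<integral>y. f (y - x) \<partial>lborel) = (\<integral>y. f y \<partial>lborel)"
  using lborel_integral_real_affine[of 1 "\<lambda>y. f (y - x)" x] by simp

lemma lborel_integrable_shift_iff:
  fixes f :: "real \<Rightarrow> real"
  shows "integrable lborel (\<lambda>y. f (y - x)) \<longleftrightarrow> integrable lborel f"
  using lborel_integrable_real_affine_iff[of 1 "\<lambda>y. f (y - x)" x] by simp

lemma
  shows integrable_phi_shift_quadratic: "integrable lborel (\<lambda>y. phi (y - x) * (K + L * y\<^sup>2))"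
    and integral_phi_shift_quadratic: "(\<integral>y. phi (y - x) * (K + L * y\<^sup>2) \<partial>lborel) = K + L * (1 + x\<^sup>2)"
proof -
  have m0: "integrable lborel phi" "(\<integral>z. phi z \<partial>lborel) = 1"
    using integrable_std_normal_moment[of 0] integral_std_normal_moment_even[of 0]
    by (simp_all add: phi_eq_std_normal_density)
  have m1: "integrable lborel (\<lambda>z. phi z * z)" "(\<integral>z. phi z * z \<partial>lborel) = 0"
    using integrable_std_normal_moment[of 1] integral_std_normal_moment_odd[of 0]
    by (simp_all add: phi_eq_std_normal_density)
  have m2: "integrable lborel (\<lambda>z. phi z * z\<^sup>2)" "(\<integral>z. phi z * z\<^sup>2 \<partial>lborel) = 1"
    using integrable_std_normal_moment[of 2] integral_std_normal_moment_even[of 1]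
    by (simp_all add: phi_eq_std_normal_density)
  have expand: "(\<lambda>z. phi z * (K + L * (z + x)\<^sup>2)) =
      (\<lambda>z. (K + L * x\<^sup>2) * phi z + (2 * L * x) * (phi z * z) + L * (phi z * z\<^sup>2))"
    by (simp add: power2_eq_square algebra_simps)
  have "integrable lborel (\<lambda>z. phi z * (K + L * (z + x)\<^sup>2))"
    unfolding expand using m0 m1 m2 by simp
  then show "integrable lborel (\<lambda>y. phi (y - x) * (K + L * y\<^sup>2))"
    using lborel_integrable_shift_iff[of "\<lambda>z. phi z * (K + L * (z + x)\<^sup>2)" x] by simp
  have "(\<integral>z. phi z * (K + L * (z + x)\<^sup>2) \<partial>lborel) = (K + L * x\<^sup>2) * 1 + (2 * L * x) * 0 + L * 1"
    unfolding expand using m0 m1 m2 by (simp only: Bochner_Integration.integral_add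
        integrable_mult_right Bochner_Integration.integrable_add integral_mult_right_zero)
  then show "(\<integral>y. phi (y - x) * (K + L * y\<^sup>2) \<partial>lborel) = K + L * (1 + x\<^sup>2)"
    using lborel_integral_shift[of "\<lambda>z. phi z * (K + L * (z + x)\<^sup>2)" x] by (simp add: algebra_simps)
qed

lemma integrable_phi_shift_mult:
  fixes g :: "real \<Rightarrow> real"
  assumes [measurable]: "g \<in> borel_measurable borel" and bound: "\<And>y. \<bar>g y\<bar> \<le> K + L * y\<^sup>2"
  shows "integrable lborel (\<lambda>y. phi (y - x) * g y)"
proof (rule Bochner_Integration.integrable_bound[OF integrable_phi_shift_quadratic])
  show "AE y in lborel. norm (phi (y - x) * g y) \<le> norm (phi (y - x) * (K + L * y\<^sup>2))"
  proof (intro AE_I2)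
    fix y
    have "0 \<le> K + L * y\<^sup>2"
      using order_trans[OF abs_ge_zero bound] .
    then show "norm (phi (y - x) * g y) \<le> norm (phi (y - x) * (K + L * y\<^sup>2))"
      using bound[of y] phi_pos[of "y - x"] by (simp add: abs_mult mult_left_mono)
  qed
qed simp

definition normal_entropy :: real where
  "normal_entropy = - (\<integral>y. phi y * ln (phi y) \<partial>lborel)"

lemma
  shows integrable_phi_shift_ln: "integrable lborel (\<lambda>y. phi (y - x) * ln (phi (y - x)))"
    and integral_phi_shift_ln: "(\<integral>y. phi (y - x) * ln (phi (y - x)) \<partial>lborel) = - normal_entropy"
proof -
  have quadratic: "phi y * ln (phi y) = phi y * (- ln (sqrt (2 * pi)) + (- 1 / 2) * y\<^sup>2)" for y
    by (simp add: ln_phi algebra_simps)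
  have "integrable lborel (\<lambda>y. phi y * ln (phi y))"
    using integrable_phi_shift_quadratic[of 0 "- ln (sqrt (2 * pi))" "- 1 / 2"] by (simp add: quadratic)
  then show "integrable lborel (\<lambda>y. phi (y - x) * ln (phi (y - x)))"
    using lborel_integrable_shift_iff[of "\<lambda>y. phi y * ln (phi y)"] by simp
  show "(\<integral>y. phi (y - x) * ln (phi (y - x)) \<partial>lborel) = - normal_entropy"
    using lborel_integral_shift[of "\<lambda>y. phi y * ln (phi y)"] by (simp add: normal_entropy_def)
qed

lemma real_prob_sets_eq: "real_prob \<mu> \<Longrightarrow> sets \<mu> = sets borel"
  by (simp add: real_prob_def)

lemma real_prob_measurable:
  "real_prob \<mu> \<Longrightarrow> f \<in> borel_measurable borel \<Longrightarrow> f \<in> borel_measurable \<mu>"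
  using measurable_cong_sets[OF real_prob_sets_eq[symmetric] refl] by blast

lemma real_prob_integrable_bounded:
  fixes f :: "real \<Rightarrow> real"
  assumes "real_prob \<mu>" "f \<in> borel_measurable borel" "\<And>x. \<bar>f x\<bar> \<le> B"
  shows "integrable \<mu> f"
proof -
  interpret prob_space \<mu> using assms(1) by (simp add: real_prob_def)
  show ?thesis using assms(3) real_prob_measurable[OF assms(1,2)]
    by (intro integrable_const_bound[where B=B]) auto
qed

lemma borel_measurable_pY [measurable]:
  assumes "real_prob \<nu>" shows "(\<lambda>y. pY y \<nu>) \<in> borel_measurable borel"
proof -
  interpret prob_space \<nu> using assms by (simp add: real_prob_def)
  have "sets (borel \<Otimes>\<^sub>M \<nu>) = sets (borel \<Otimes>\<^sub>M borel)"
    using real_prob_sets_eq[OF assms] by (intro sets_pair_measure_cong) auto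
  moreover have "(\<lambda>(y, x). phi (y - x)) \<in> borel_measurable (borel \<Otimes>\<^sub>M borel)"
    by measurable
  ultimately have "(\<lambda>(y, x). phi (y - x)) \<in> borel_measurable (borel \<Otimes>\<^sub>M \<nu>)"
    using measurable_cong_sets by blast
  then show ?thesis unfolding pY_def
    by (rule borel_measurable_lebesgue_integral[where f="\<lambda>y x. phi (y - x)", simplified])
qed

lemma integrable_phi_shift: "real_prob \<nu> \<Longrightarrow> integrable \<nu> (\<lambda>x. phi (y - x))"
  by (rule real_prob_integrable_bounded[where B="1 / sqrt (2 * pi)"])
     (auto simp: phi_le less_imp_le[OF phi_pos])

lemma pY_le: assumes "real_prob \<nu>" shows "pY y \<nu> \<le> 1 / sqrt (2 * pi)"
proof -
  interpret prob_space \<nu> using assms by (simp add: real_prob_def)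
  have "pY y \<nu> \<le> (\<integral>x. 1 / sqrt (2 * pi) \<partial>\<nu>)" unfolding pY_def
    by (intro integral_mono integrable_phi_shift assms) (auto simp: phi_le)
  then show ?thesis using prob_space by simp
qed

lemma pY_ge_atom:
  assumes "real_prob \<nu>" shows "measure \<nu> {0} * phi y \<le> pY y \<nu>"
proof -
  interpret prob_space \<nu> using assms by (simp add: real_prob_def)
  have "{0} \<in> sets \<nu>" using real_prob_sets_eq[OF assms] by simp
  moreover have "(\<lambda>x. phi (y - x) * indicator {0} x) = (\<lambda>x. phi y * indicator {0} x)"
    by (auto simp: indicator_def)
  ultimately have "measure \<nu> {0} * phi y = (\<integral>x. phi (y - x) * indicator {0} x \<partial>\<nu>)"
    by simp
  also have "\<dots> \<le> pY y \<nu>" unfolding pY_def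
    by (intro integral_mono integrable_phi_shift assms
          real_prob_integrable_bounded[where B="1 / sqrt (2 * pi)"])
       (auto simp: indicator_def less_imp_le[OF phi_pos] phi_le)
  finally show ?thesis .
qed

lemma pY_pos: "real_prob \<nu> \<Longrightarrow> 0 < measure \<nu> {0} \<Longrightarrow> 0 < pY y \<nu>"
  using pY_ge_atom[of \<nu> y] phi_pos[of y] by (smt (verit) mult_pos_pos)

text \<open>This is where the atom at \<open>0\<close> is needed: it makes every integral against \<open>ln (pY y \<nu>)\<close>
  finite.\<close>

lemma abs_ln_pY_le:
  assumes "real_prob \<nu>" "0 < measure \<nu> {0}"
  shows "\<bar>ln (pY y \<nu>)\<bar> \<le> ln (sqrt (2 * pi)) - ln (measure \<nu> {0}) + 1 / 2 * y\<^sup>2"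
proof -
  have pos: "0 < pY y \<nu>" using pY_pos assms by blast
  have "ln (pY y \<nu>) \<le> ln (1 / sqrt (2 * pi))" using pY_le[OF assms(1)] pos by simp
  also have "\<dots> \<le> 0" using pi_gt3 by (simp add: ln_div)
  finally have upper: "ln (pY y \<nu>) \<le> 0" .
  have "ln (measure \<nu> {0} * phi y) \<le> ln (pY y \<nu>)"
    using pY_ge_atom[OF assms(1)] assms(2) phi_pos pos by simp
  moreover have "ln (measure \<nu> {0} * phi y) = ln (measure \<nu> {0}) - y\<^sup>2 / 2 - ln (sqrt (2 * pi))"
    using assms(2) phi_pos[of y] by (simp add: ln_mult ln_phi)
  ultimately show ?thesis using upper by linarith
qed

lemma borel_measurable_ln_pY [measurable]:
  assumes "real_prob \<nu>" shows "(\<lambda>y. ln (pY y \<nu>)) \<in> borel_measurable borel"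
  using borel_measurable_pY[OF assms] by measurable

lemma pY_Fubini:
  fixes g :: "real \<Rightarrow> real"
  assumes \<mu>: "real_prob \<mu>" "integrable \<mu> (\<lambda>x. x\<^sup>2)"
    and [measurable]: "g \<in> borel_measurable borel" and bound: "\<And>y. \<bar>g y\<bar> \<le> K + L * y\<^sup>2"
  shows "integrable \<mu> (\<lambda>x. \<integral>y. phi (y - x) * g y \<partial>lborel)"
    and "integrable lborel (\<lambda>y. pY y \<mu> * g y)"
    and "(\<integral>x. (\<integral>y. phi (y - x) * g y \<partial>lborel) \<partial>\<mu>) = (\<integral>y. pY y \<mu> * g y \<partial>lborel)"
proof -
  interpret prob_space \<mu> using \<mu> by (simp add: real_prob_def)
  interpret pair_sigma_finite \<mu> lborel ..
  have "sets (\<mu> \<Otimes>\<^sub>M lborel) = sets (borel \<Otimes>\<^sub>M borel)"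
    using real_prob_sets_eq[OF \<mu>(1)] by (intro sets_pair_measure_cong) auto
  then have pair_measurable: "f \<in> borel_measurable (\<mu> \<Otimes>\<^sub>M lborel)"
    if "f \<in> borel_measurable (borel \<Otimes>\<^sub>M borel)" for f :: "real \<times> real \<Rightarrow> real"
    using that measurable_cong_sets by blast
  have norm_le: "norm (phi (y - x) * g y) \<le> phi (y - x) * (K + L * y\<^sup>2)" for x y
    using bound[of y] phi_pos[of "y - x"] by (simp add: abs_mult mult_left_mono)
  have inner_le: "norm (\<integral>y. norm (phi (y - x) * g y) \<partial>lborel) \<le> norm (K + L * (1 + x\<^sup>2))" for x
  proof -
    have "(\<integral>y. norm (phi (y - x) * g y) \<partial>lborel) \<le> (\<integral>y. phi (y - x) * (K + L * y\<^sup>2) \<partial>lborel)"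
      using integrable_phi_shift_mult[OF _ bound] integrable_phi_shift_quadratic norm_le
      by (intro integral_mono) auto
    then show ?thesis using integral_phi_shift_quadratic[of x K L] by simp
  qed
  have joint: "integrable (\<mu> \<Otimes>\<^sub>M lborel) (\<lambda>(x, y). phi (y - x) * g y)"
  proof (rule Fubini_integrable)
    show "(\<lambda>(x, y). phi (y - x) * g y) \<in> borel_measurable (\<mu> \<Otimes>\<^sub>M lborel)"
      by (rule pair_measurable) measurable
    have "(\<lambda>(x, y). norm (phi (y - x) * g y)) \<in> borel_measurable (\<mu> \<Otimes>\<^sub>M lborel)"
      by (rule pair_measurable) measurable
    then have "(\<lambda>x. \<integral>y. norm (phi (y - x) * g y) \<partial>lborel) \<in> borel_measurable \<mu>"
      using lborel.borel_measurable_lebesgue_integral[of "\<lambda>x y. norm (phi (y - x) * g y)" \<mu>] by simp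
    moreover have "integrable \<mu> (\<lambda>x. K + L * (1 + x\<^sup>2))"
      using \<mu>(2) by (simp add: algebra_simps)
    ultimately show "integrable \<mu> (\<lambda>x. \<integral>y. norm (case (x, y) of (x, y) \<Rightarrow> phi (y - x) * g y) \<partial>lborel)"
      using inner_le by (auto intro: Bochner_Integration.integrable_bound)
    show "AE x in \<mu>. integrable lborel (\<lambda>y. case (x, y) of (x, y) \<Rightarrow> phi (y - x) * g y)"
      using integrable_phi_shift_mult[OF _ bound] by simp
  qed
  show "integrable \<mu> (\<lambda>x. \<integral>y. phi (y - x) * g y \<partial>lborel)"
    using integrable_fst[OF joint] by simp
  show "integrable lborel (\<lambda>y. pY y \<mu> * g y)"
    using integrable_snd[OF joint] by (simp add: pY_def)
  show "(\<integral>x. (\<integral>y. phi (y - x) * g y \<partial>lborel) \<partial>\<mu>) = (\<integral>y. pY y \<mu> * g y \<partial>lborel)"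
    using Fubini_integral[OF joint] by (simp add: pY_def)
qed

lemma
  assumes "real_prob \<mu>" "integrable \<mu> (\<lambda>x. x\<^sup>2)"
  shows integrable_pY: "integrable lborel (\<lambda>y. pY y \<mu>)"
    and integral_pY: "(\<integral>y. pY y \<mu> \<partial>lborel) = 1"
proof -
  interpret prob_space \<mu> using assms(1) by (simp add: real_prob_def)
  note Fubini = pY_Fubini[OF assms, of "\<lambda>y. 1" 1 0]
  show "integrable lborel (\<lambda>y. pY y \<mu>)" using Fubini(2) by simp
  show "(\<integral>y. pY y \<mu> \<partial>lborel) = 1"
    using Fubini(3) integral_phi_shift_quadratic[of _ 1 0] prob_space by simp
qed

definition output_cross_entropy :: "real measure \<Rightarrow> real measure \<Rightarrow> real" where
  "output_cross_entropy \<mu> \<nu> = - (\<integral>y. pY y \<mu> * ln (pY y \<nu>) \<partial>lborel)"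

lemma integrable_pY_ln_pY:
  assumes "real_prob \<mu>" "integrable \<mu> (\<lambda>x. x\<^sup>2)" "real_prob \<nu>" "0 < measure \<nu> {0}"
  shows "integrable lborel (\<lambda>y. pY y \<mu> * ln (pY y \<nu>))"
  using pY_Fubini(2)[OF assms(1,2) borel_measurable_ln_pY[OF assms(3)] abs_ln_pY_le[OF assms(3,4)]] .

lemma dfun_eq:
  assumes "real_prob \<nu>" "0 < measure \<nu> {0}"
  shows "dfun x \<nu> = - normal_entropy - (\<integral>y. phi (y - x) * ln (pY y \<nu>) \<partial>lborel)"
proof -
  have "dfun x \<nu> = (\<integral>y. phi (y - x) * ln (phi (y - x)) - phi (y - x) * ln (pY y \<nu>) \<partial>lborel)"
    unfolding dfun_def using pY_pos[OF assms] phi_pos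
    by (intro Bochner_Integration.integral_cong) (simp_all add: ln_div right_diff_distrib less_imp_neq[symmetric])
  also have "\<dots> = - normal_entropy - (\<integral>y. phi (y - x) * ln (pY y \<nu>) \<partial>lborel)"
    using integrable_phi_shift_ln integral_phi_shift_ln
      integrable_phi_shift_mult[OF borel_measurable_ln_pY[OF assms(1)] abs_ln_pY_le[OF assms]]
    by simp
  finally show ?thesis .
qed

lemma
  assumes "real_prob \<mu>" "integrable \<mu> (\<lambda>x. x\<^sup>2)" "real_prob \<nu>" "0 < measure \<nu> {0}"
  shows integrable_dfun: "integrable \<mu> (\<lambda>x. dfun x \<nu>)"
    and integral_dfun: "(\<integral>x. dfun x \<nu> \<partial>\<mu>) = output_cross_entropy \<mu> \<nu> - normal_entropy"
proof -
  interpret prob_space \<mu> using assms(1) by (simp add: real_prob_def)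
  note Fubini = pY_Fubini[OF assms(1,2) borel_measurable_ln_pY[OF assms(3)] abs_ln_pY_le[OF assms(3,4)]]
  show "integrable \<mu> (\<lambda>x. dfun x \<nu>)"
    unfolding dfun_eq[OF assms(3,4)] using Fubini(1) by simp
  show "(\<integral>x. dfun x \<nu> \<partial>\<mu>) = output_cross_entropy \<mu> \<nu> - normal_entropy"
    unfolding dfun_eq[OF assms(3,4)] output_cross_entropy_def using Fubini(1,3) prob_space by simp
qed

lemma Ifun_eq_output_cross_entropy:
  assumes "real_prob \<mu>" "integrable \<mu> (\<lambda>x. x\<^sup>2)" "0 < measure \<mu> {0}"
  shows "Ifun \<mu> = output_cross_entropy \<mu> \<mu> - normal_entropy"
  unfolding Ifun_def using integral_dfun[OF assms(1,2,1,3)] .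

lemma output_cross_entropy_Gibbs:
  assumes \<mu>: "real_prob \<mu>" "integrable \<mu> (\<lambda>x. x\<^sup>2)" "0 < measure \<mu> {0}"
    and \<nu>: "real_prob \<nu>" "integrable \<nu> (\<lambda>x. x\<^sup>2)" "0 < measure \<nu> {0}"
  shows "output_cross_entropy \<mu> \<mu> \<le> output_cross_entropy \<mu> \<nu>"
proof -
  note integrable = integrable_pY_ln_pY[OF \<mu>(1,2) \<nu>(1,3)] integrable_pY_ln_pY[OF \<mu>(1,2) \<mu>(1,3)]
    integrable_pY[OF \<mu>(1,2)] integrable_pY[OF \<nu>(1,2)]
  have "output_cross_entropy \<mu> \<mu> - output_cross_entropy \<mu> \<nu> =
      (\<integral>y. pY y \<mu> * ln (pY y \<nu>) - pY y \<mu> * ln (pY y \<mu>) \<partial>lborel)"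
    unfolding output_cross_entropy_def using integrable by simp
  also have "\<dots> \<le> (\<integral>y. pY y \<nu> - pY y \<mu> \<partial>lborel)"
  proof (rule integral_mono)
    fix y
    have pos: "0 < pY y \<mu>" "0 < pY y \<nu>" using pY_pos \<mu>(1,3) \<nu>(1,3) by blast+
    have "pY y \<mu> * ln (pY y \<nu> / pY y \<mu>) \<le> pY y \<mu> * (pY y \<nu> / pY y \<mu> - 1)"
      using pos by (intro mult_left_mono ln_le_minus_one) simp_all
    then show "pY y \<mu> * ln (pY y \<nu>) - pY y \<mu> * ln (pY y \<mu>) \<le> pY y \<nu> - pY y \<mu>"
      using pos by (simp add: ln_div right_diff_distrib)
  qed (use integrable in simp_all)
  also have "\<dots> = 0" using integral_pY[OF \<mu>(1,2)] integral_pY[OF \<nu>(1,2)] integrable by simp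
  finally show ?thesis by simp
qed

section \<open>Optimality conditions\<close>

lemma nn_integral_square_eq:
  "integrable \<mu> (\<lambda>x::real. x\<^sup>2) \<Longrightarrow> (\<integral>\<^sup>+x. ennreal (x\<^sup>2) \<partial>\<mu>) = ennreal (\<integral>x. x\<^sup>2 \<partial>\<mu>)"
  by (intro nn_integral_eq_integral) auto

lemma mem_Lambda_q_iff:
  "\<mu> \<in> Lambda_q q \<longleftrightarrow> real_prob \<mu> \<and> q \<le> measure \<mu> {0} \<and> integrable \<mu> (\<lambda>x. x\<^sup>2)"
proof
  assume "\<mu> \<in> Lambda_q q"
  then obtain \<gamma> where \<mu>: "real_prob \<mu>" "q \<le> measure \<mu> {0}" "(\<integral>\<^sup>+x. ennreal (x\<^sup>2) \<partial>\<mu>) \<le> ennreal \<gamma>"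
    unfolding Lambda_q_def Lambda_def by auto
  then have "(\<integral>\<^sup>+x. ennreal (norm (x\<^sup>2)) \<partial>\<mu>) < \<infinity>"
    by (simp add: le_less_trans)
  then have "integrable \<mu> (\<lambda>x. x\<^sup>2)"
    using real_prob_measurable[OF \<mu>(1), of "\<lambda>x. x\<^sup>2"] by (simp add: integrable_iff_bounded)
  with \<mu> show "real_prob \<mu> \<and> q \<le> measure \<mu> {0} \<and> integrable \<mu> (\<lambda>x. x\<^sup>2)" by simp
next
  assume "real_prob \<mu> \<and> q \<le> measure \<mu> {0} \<and> integrable \<mu> (\<lambda>x. x\<^sup>2)"
  then show "\<mu> \<in> Lambda_q q"
    unfolding Lambda_q_def Lambda_def
    by (auto simp: nn_integral_square_eq intro!: bexI[of _ "\<integral>x. x\<^sup>2 \<partial>\<mu>"])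
qed

lemma mem_Lambda_iff:
  "0 \<le> \<gamma> \<Longrightarrow> \<mu> \<in> Lambda \<gamma> q \<longleftrightarrow> \<mu> \<in> Lambda_q q \<and> (\<integral>x. x\<^sup>2 \<partial>\<mu>) \<le> \<gamma>"
  using mem_Lambda_q_iff[of \<mu> q] nn_integral_square_eq[of \<mu>]
  by (auto simp: Lambda_q_def Lambda_def)

lemma integral_square_diff_const:
  assumes "\<mu> \<in> Lambda_q q"
  shows "(\<integral>x. x\<^sup>2 - c \<partial>\<mu>) = (\<integral>x. x\<^sup>2 \<partial>\<mu>) - c"
proof -
  interpret prob_space \<mu> using assms by (simp add: mem_Lambda_q_iff real_prob_def)
  show ?thesis using assms prob_space by (simp add: mem_Lambda_q_iff)
qed

context
  fixes t :: real and \<mu> \<nu> :: "real measure"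
  assumes \<mu>: "real_prob \<mu>" and \<nu>: "real_prob \<nu>" and t: "0 \<le> t" "t \<le> 1"
begin

lemma real_prob_mixture: "real_prob (mixture t \<mu> \<nu>)"
  using \<mu> \<nu> t prob_space_mixture[of \<mu> \<nu> t] sets_mixture[of \<mu> \<nu> t] by (simp add: real_prob_def)

lemma measure_atom_mixture:
  "measure (mixture t \<mu> \<nu>) {x} = (1 - t) * measure \<mu> {x} + t * measure \<nu> {x}"
  using \<mu> \<nu> t measure_mixture[of \<mu> \<nu> t "{x}"] by (simp add: real_prob_def)

lemma pY_mixture: "pY y (mixture t \<mu> \<nu>) = (1 - t) * pY y \<mu> + t * pY y \<nu>"
  unfolding pY_def using \<mu> \<nu> t integral_mixture[of \<mu> \<nu> t "\<lambda>x. phi (y - x)"]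
    integrable_phi_shift[OF \<mu>] integrable_phi_shift[OF \<nu>] by (simp add: real_prob_def)

lemma
  assumes "integrable \<mu> (\<lambda>x. x\<^sup>2)" "integrable \<nu> (\<lambda>x. x\<^sup>2)"
  shows integrable_square_mixture: "integrable (mixture t \<mu> \<nu>) (\<lambda>x. x\<^sup>2)"
    and integral_square_mixture:
      "(\<integral>x. x\<^sup>2 \<partial>mixture t \<mu> \<nu>) = (1 - t) * (\<integral>x. x\<^sup>2 \<partial>\<mu>) + t * (\<integral>x. x\<^sup>2 \<partial>\<nu>)"
  using \<mu> \<nu> t assms integrable_mixture[of \<mu> \<nu> t "\<lambda>x. x\<^sup>2"] integral_mixture[of \<mu> \<nu> t "\<lambda>x. x\<^sup>2"]
  by (simp_all add: real_prob_def)

end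

lemma mixture_in_Lambda_q:
  assumes "\<mu> \<in> Lambda_q q" "\<nu> \<in> Lambda_q q" "0 \<le> t" "t \<le> 1"
  shows "mixture t \<mu> \<nu> \<in> Lambda_q q"
proof -
  have \<mu>: "real_prob \<mu>" "q \<le> measure \<mu> {0}" "integrable \<mu> (\<lambda>x. x\<^sup>2)"
    and \<nu>: "real_prob \<nu>" "q \<le> measure \<nu> {0}" "integrable \<nu> (\<lambda>x. x\<^sup>2)"
    using assms(1,2) by (simp_all add: mem_Lambda_q_iff)
  have "q = (1 - t) * q + t * q" by (simp add: algebra_simps)
  also have "\<dots> \<le> (1 - t) * measure \<mu> {0} + t * measure \<nu> {0}"
    using assms(3,4) \<mu>(2) \<nu>(2) by (intro add_mono mult_left_mono) simp_all
  also have "\<dots> = measure (mixture t \<mu> \<nu>) {0}"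
    using measure_atom_mixture[OF \<mu>(1) \<nu>(1) assms(3,4)] by simp
  finally show ?thesis
    using real_prob_mixture[OF \<mu>(1) \<nu>(1) assms(3,4)]
      integrable_square_mixture[OF \<mu>(1) \<nu>(1) assms(3,4) \<mu>(3) \<nu>(3)]
    by (simp add: mem_Lambda_q_iff)
qed

lemma return_0_in_Lambda_q: "q \<le> 1 \<Longrightarrow> return borel 0 \<in> Lambda_q q"
  by (simp add: mem_Lambda_q_iff real_prob_def prob_space_return measure_return
      integrable_iff_bounded nn_integral_return)

lemma output_cross_entropy_mixture_left:
  assumes "\<mu>1 \<in> Lambda_q q" "\<mu>2 \<in> Lambda_q q" "\<nu> \<in> Lambda_q q" "0 < q" "0 \<le> s" "s \<le> 1"
  shows "output_cross_entropy (mixture s \<mu>1 \<mu>2) \<nu> =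
    (1 - s) * output_cross_entropy \<mu>1 \<nu> + s * output_cross_entropy \<mu>2 \<nu>"
proof -
  have integrable: "integrable lborel (\<lambda>y. pY y \<mu> * ln (pY y \<nu>))" if "\<mu> \<in> Lambda_q q" for \<mu>
    using that assms(3,4) by (intro integrable_pY_ln_pY) (auto simp: mem_Lambda_q_iff)
  have "pY y (mixture s \<mu>1 \<mu>2) * ln (pY y \<nu>) =
      (1 - s) * (pY y \<mu>1 * ln (pY y \<nu>)) + s * (pY y \<mu>2 * ln (pY y \<nu>))" for y
  proof -
    have "pY y (mixture s \<mu>1 \<mu>2) = (1 - s) * pY y \<mu>1 + s * pY y \<mu>2"
      using assms(1,2,5,6) by (intro pY_mixture) (simp_all add: mem_Lambda_q_iff)
    then show ?thesis by (simp only:) (simp add: algebra_simps)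
  qed
  then show ?thesis
    using integrable[OF assms(1)] integrable[OF assms(2)] by (simp add: output_cross_entropy_def)
qed

lemma output_cross_entropy_mixture_self:
  assumes "\<mu>0 \<in> Lambda_q q" "\<mu> \<in> Lambda_q q" "0 < q" "0 \<le> t" "t \<le> 1"
  shows "output_cross_entropy (mixture t \<mu>0 \<mu>) (mixture t \<mu>0 \<mu>) =
    (1 - t) * output_cross_entropy \<mu>0 \<mu>0 + t * output_cross_entropy \<mu> \<mu>0
    - (\<integral>y. mix_rel_entropy (pY y \<mu>0) (pY y \<mu>) t \<partial>lborel)"
proof -
  define \<mu>t where "\<mu>t = mixture t \<mu>0 \<mu>"
  have \<mu>t: "\<mu>t \<in> Lambda_q q" unfolding \<mu>t_def using mixture_in_Lambda_q assms by blast
  have integrable: "integrable lborel (\<lambda>y. pY y \<mu>t * ln (pY y \<nu>))" if "\<nu> \<in> Lambda_q q" for \<nu>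
    using \<mu>t that assms(3) by (intro integrable_pY_ln_pY) (auto simp: mem_Lambda_q_iff)
  have "pY y \<mu>t * ln (pY y \<mu>t) - pY y \<mu>t * ln (pY y \<mu>0) = mix_rel_entropy (pY y \<mu>0) (pY y \<mu>) t" for y
  proof -
    have "pY y \<mu>t = (1 - t) * pY y \<mu>0 + t * pY y \<mu>"
      unfolding \<mu>t_def using assms by (intro pY_mixture) (auto simp: mem_Lambda_q_iff)
    then show ?thesis unfolding mix_rel_entropy_def by (simp add: right_diff_distrib)
  qed
  then have "(\<integral>y. mix_rel_entropy (pY y \<mu>0) (pY y \<mu>) t \<partial>lborel) =
      (\<integral>y. pY y \<mu>t * ln (pY y \<mu>t) - pY y \<mu>t * ln (pY y \<mu>0) \<partial>lborel)"
    by simp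
  also have "\<dots> = output_cross_entropy \<mu>t \<mu>0 - output_cross_entropy \<mu>t \<mu>t"
    using integrable[OF \<mu>t] integrable[OF assms(1)] by (simp add: output_cross_entropy_def)
  finally have "output_cross_entropy \<mu>t \<mu>t =
      output_cross_entropy \<mu>t \<mu>0 - (\<integral>y. mix_rel_entropy (pY y \<mu>0) (pY y \<mu>) t \<partial>lborel)"
    by simp
  then show ?thesis
    unfolding \<mu>t_def using output_cross_entropy_mixture_left[OF assms(1,2,1,3-5)] by simp
qed

lemma output_cross_entropy_directional_le:
  assumes q: "0 < q" and \<mu>0: "\<mu>0 \<in> Lambda_q q" and \<mu>: "\<mu> \<in> Lambda_q q" and \<epsilon>: "0 < \<epsilon>" "\<epsilon> \<le> 1"
    and opt: "\<And>t. 0 < t \<Longrightarrow> t \<le> \<epsilon> \<Longrightarrow>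
      output_cross_entropy (mixture t \<mu>0 \<mu>) (mixture t \<mu>0 \<mu>) \<le> output_cross_entropy \<mu>0 \<mu>0"
  shows "output_cross_entropy \<mu> \<mu>0 \<le> output_cross_entropy \<mu>0 \<mu>0"
proof -
  define t :: "nat \<Rightarrow> real" where "t n = \<epsilon> / real (Suc n)" for n
  have t: "0 < t n" "t n \<le> \<epsilon>" for n
    unfolding t_def using \<epsilon> by (auto simp: divide_simps)
  have "t \<longlonglongrightarrow> 0"
    unfolding t_def by (intro tendsto_divide_0[OF tendsto_const] filterlim_at_top_imp_at_infinity
      filterlim_real_sequentially[THEN filterlim_compose] filterlim_Suc)
  moreover have "integrable lborel (\<lambda>y. pY y \<mu> * (ln (pY y \<mu>) - ln (pY y \<mu>0)))"
    using \<mu>0 \<mu> q integrable_pY_ln_pY[of \<mu> \<mu>] integrable_pY_ln_pY[of \<mu> \<mu>0]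
    by (simp add: mem_Lambda_q_iff right_diff_distrib)
  ultimately have lim: "(\<lambda>n. \<integral>y. mix_rel_entropy (pY y \<mu>0) (pY y \<mu>) (t n) / t n \<partial>lborel)
      \<longlonglongrightarrow> (\<integral>y. pY y \<mu> - pY y \<mu>0 \<partial>lborel)"
    using \<mu>0 \<mu> q t \<epsilon>
    by (intro tendsto_integral_mix_rel_entropy_quotient pY_pos integrable_pY)
       (auto simp: mem_Lambda_q_iff intro: order_trans)
  have zero: "(\<integral>y. pY y \<mu> - pY y \<mu>0 \<partial>lborel) = 0"
    using \<mu>0 \<mu> integrable_pY integral_pY by (simp add: mem_Lambda_q_iff)
  have bound: "output_cross_entropy \<mu> \<mu>0 - output_cross_entropy \<mu>0 \<mu>0
      \<le> (\<integral>y. mix_rel_entropy (pY y \<mu>0) (pY y \<mu>) (t n) / t n \<partial>lborel)" for n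
  proof -
    have "t n * (output_cross_entropy \<mu> \<mu>0 - output_cross_entropy \<mu>0 \<mu>0)
        \<le> (\<integral>y. mix_rel_entropy (pY y \<mu>0) (pY y \<mu>) (t n) \<partial>lborel)"
      using opt[of "t n"] output_cross_entropy_mixture_self[OF \<mu>0 \<mu> q, of "t n"] t[of n] \<epsilon>
      by (simp add: algebra_simps)
    then show ?thesis
      using t[of n] by (simp add: field_simps)
  qed
  show ?thesis
    using LIMSEQ_le_const[OF lim] bound zero by fastforce
qed

lemma integral_f_lam:
  assumes \<mu>: "\<mu> \<in> Lambda_q q" and \<mu>0: "\<mu>0 \<in> Lambda_q q" and q: "0 < q"
  shows "(\<integral>x. f_lam lam \<gamma> x \<mu>0 \<partial>\<mu>) =
    (output_cross_entropy \<mu> \<mu>0 - output_cross_entropy \<mu>0 \<mu>0) - lam * ((\<integral>x. x\<^sup>2 \<partial>\<mu>) - \<gamma>)"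
proof -
  have \<mu>': "real_prob \<mu>" "integrable \<mu> (\<lambda>x. x\<^sup>2)" and \<mu>0': "real_prob \<mu>0" "0 < measure \<mu>0 {0}"
    using \<mu> \<mu>0 q by (auto simp: mem_Lambda_q_iff)
  interpret prob_space \<mu> using \<mu>'(1) by (simp add: real_prob_def)
  have "Ifun \<mu>0 = output_cross_entropy \<mu>0 \<mu>0 - normal_entropy"
    using \<mu>0 q by (intro Ifun_eq_output_cross_entropy) (auto simp: mem_Lambda_q_iff)
  then show ?thesis
    unfolding f_lam_def using integrable_dfun[OF \<mu>' \<mu>0'] integral_dfun[OF \<mu>' \<mu>0'] \<mu>'(2) prob_space
    by simp
qed

lemma Ifun_le_if_multiplier:
  assumes q: "0 < q" and \<gamma>: "0 \<le> \<gamma>" and \<mu>0: "\<mu>0 \<in> Lambda_q q" and lam: "0 \<le> lam"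
    and multiplier: "\<forall>\<mu>\<in>Lambda_q q. (\<integral>x. f_lam lam \<gamma> x \<mu>0 \<partial>\<mu>) \<le> 0"
    and \<mu>: "\<mu> \<in> Lambda \<gamma> q"
  shows "Ifun \<mu> \<le> Ifun \<mu>0"
proof -
  have \<mu>': "\<mu> \<in> Lambda_q q" "(\<integral>x. x\<^sup>2 \<partial>\<mu>) - \<gamma> \<le> 0"
    using \<mu> \<gamma> mem_Lambda_iff by auto
  then have "output_cross_entropy \<mu> \<mu>0 \<le> output_cross_entropy \<mu>0 \<mu>0"
    using multiplier integral_f_lam[OF \<mu>'(1) \<mu>0 q, of lam \<gamma>] lam
    by (smt (verit) mult_nonneg_nonpos)
  moreover have "output_cross_entropy \<mu> \<mu> \<le> output_cross_entropy \<mu> \<mu>0"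
    using \<mu>' \<mu>0 q by (intro output_cross_entropy_Gibbs) (auto simp: mem_Lambda_q_iff)
  ultimately show ?thesis
    using \<mu>' \<mu>0 q Ifun_eq_output_cross_entropy[of \<mu>] Ifun_eq_output_cross_entropy[of \<mu>0]
    by (auto simp: mem_Lambda_q_iff)
qed

lemma first_order_optimal_if_Ifun_maximal:
  assumes q: "0 < q" and \<gamma>: "0 \<le> \<gamma>" and \<mu>0: "\<mu>0 \<in> Lambda \<gamma> q"
    and opt: "\<forall>\<mu>\<in>Lambda \<gamma> q. Ifun \<mu> \<le> Ifun \<mu>0"
  shows "first_order_optimal (Lambda_q q) mixture
    (\<lambda>\<mu>. output_cross_entropy \<mu> \<mu>0 - output_cross_entropy \<mu>0 \<mu>0) (\<lambda>\<mu>. (\<integral>x. x\<^sup>2 \<partial>\<mu>) - \<gamma>) \<mu>0"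
proof
  have \<mu>0': "\<mu>0 \<in> Lambda_q q" using \<mu>0 \<gamma> mem_Lambda_iff by auto
  show "\<mu>0 \<in> Lambda_q q" "(\<integral>x. x\<^sup>2 \<partial>\<mu>0) - \<gamma> \<le> 0"
    using \<mu>0 \<gamma> mem_Lambda_iff by auto
  show "mixture t \<mu>1 \<mu>2 \<in> Lambda_q q"
    and "output_cross_entropy (mixture t \<mu>1 \<mu>2) \<mu>0 - output_cross_entropy \<mu>0 \<mu>0 =
      (1 - t) * (output_cross_entropy \<mu>1 \<mu>0 - output_cross_entropy \<mu>0 \<mu>0) +
      t * (output_cross_entropy \<mu>2 \<mu>0 - output_cross_entropy \<mu>0 \<mu>0)"
    and "(\<integral>x. x\<^sup>2 \<partial>mixture t \<mu>1 \<mu>2) - \<gamma> =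
      (1 - t) * ((\<integral>x. x\<^sup>2 \<partial>\<mu>1) - \<gamma>) + t * ((\<integral>x. x\<^sup>2 \<partial>\<mu>2) - \<gamma>)"
    if "\<mu>1 \<in> Lambda_q q" "\<mu>2 \<in> Lambda_q q" "0 \<le> t" "t \<le> 1" for t \<mu>1 \<mu>2
    using that mixture_in_Lambda_q output_cross_entropy_mixture_left[OF that(1,2) \<mu>0' q that(3,4)]
      integral_square_mixture[of \<mu>1 \<mu>2 t]
    by (auto simp: mem_Lambda_q_iff algebra_simps)
  show "output_cross_entropy \<mu> \<mu>0 - output_cross_entropy \<mu>0 \<mu>0 \<le> 0"
    if \<mu>: "\<mu> \<in> Lambda_q q" and \<epsilon>: "0 < \<epsilon>" "\<epsilon> \<le> 1"
      and feasible: "\<And>t. 0 < t \<Longrightarrow> t \<le> \<epsilon> \<Longrightarrow> (\<integral>x. x\<^sup>2 \<partial>mixture t \<mu>0 \<mu>) - \<gamma> \<le> 0" for \<mu> \<epsilon>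
  proof -
    have "output_cross_entropy (mixture t \<mu>0 \<mu>) (mixture t \<mu>0 \<mu>) \<le> output_cross_entropy \<mu>0 \<mu>0"
      if t: "0 < t" "t \<le> \<epsilon>" for t
    proof -
      have \<mu>t: "mixture t \<mu>0 \<mu> \<in> Lambda_q q"
        using mixture_in_Lambda_q[OF \<mu>0' \<mu>] t \<epsilon> by simp
      with feasible[OF t] \<gamma> have "mixture t \<mu>0 \<mu> \<in> Lambda \<gamma> q"
        by (simp add: mem_Lambda_iff)
      with opt have "Ifun (mixture t \<mu>0 \<mu>) \<le> Ifun \<mu>0" by blast
      then show ?thesis
        using \<mu>t \<mu>0' q Ifun_eq_output_cross_entropy[of "mixture t \<mu>0 \<mu>"] Ifun_eq_output_cross_entropy[of \<mu>0]
        by (auto simp: mem_Lambda_q_iff)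
    qed
    then show ?thesis using output_cross_entropy_directional_le[OF q \<mu>0' \<mu> \<epsilon>] by simp
  qed
qed

theorem lemma5:
  fixes \<gamma> q :: real and \<mu>0 :: "real measure"
  assumes "\<gamma> > 0" and "0 < q" and "q < 1"
    and "\<mu>0 \<in> Lambda \<gamma> q"
  shows "(\<forall>\<mu>\<in>Lambda \<gamma> q. Ifun \<mu> \<le> Ifun \<mu>0) \<longleftrightarrow>
         (\<exists>lam::real. lam \<ge> 0 \<and> lam * (\<integral>x. x\<^sup>2 - \<gamma> \<partial>\<mu>0) = 0 \<and>
                 (\<forall>\<mu>\<in>Lambda_q q. (\<integral>x. f_lam lam \<gamma> x \<mu>0 \<partial>\<mu>) \<le> 0))"
proof
  have \<mu>0: "\<mu>0 \<in> Lambda_q q" using assms(1,4) mem_Lambda_iff by auto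
  assume "\<forall>\<mu>\<in>Lambda \<gamma> q. Ifun \<mu> \<le> Ifun \<mu>0"
  then interpret first_order_optimal "Lambda_q q" mixture
    "\<lambda>\<mu>. output_cross_entropy \<mu> \<mu>0 - output_cross_entropy \<mu>0 \<mu>0" "\<lambda>\<mu>. (\<integral>x. x\<^sup>2 \<partial>\<mu>) - \<gamma>" \<mu>0
    using first_order_optimal_if_Ifun_maximal assms by simp
  have "(\<integral>x. x\<^sup>2 \<partial>return borel (0::real)) - \<gamma> < 0"
    using assms(1) by (simp add: integral_return)
  then obtain lam where "lam \<ge> 0" "lam * ((\<integral>x. x\<^sup>2 \<partial>\<mu>0) - \<gamma>) = 0"
    and "\<forall>\<mu>\<in>Lambda_q q. output_cross_entropy \<mu> \<mu>0 - output_cross_entropy \<mu>0 \<mu>0 \<le> lam * ((\<integral>x. x\<^sup>2 \<partial>\<mu>) - \<gamma>)"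
    using Lagrange_multiplier_exists[OF return_0_in_Lambda_q] assms(3) by force
  moreover note integral_square_diff_const[OF \<mu>0]
  ultimately show "\<exists>lam\<ge>0. lam * (\<integral>x. x\<^sup>2 - \<gamma> \<partial>\<mu>0) = 0 \<and>
      (\<forall>\<mu>\<in>Lambda_q q. (\<integral>x. f_lam lam \<gamma> x \<mu>0 \<partial>\<mu>) \<le> 0)"
    using integral_f_lam[OF _ \<mu>0 assms(2)] by (intro exI[of _ lam]) auto
next
  assume "\<exists>lam\<ge>0. lam * (\<integral>x. x\<^sup>2 - \<gamma> \<partial>\<mu>0) = 0 \<and>
      (\<forall>\<mu>\<in>Lambda_q q. (\<integral>x. f_lam lam \<gamma> x \<mu>0 \<partial>\<mu>) \<le> 0)"
  then show "\<forall>\<mu>\<in>Lambda \<gamma> q. Ifun \<mu> \<le> Ifun \<mu>0"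
    using Ifun_le_if_multiplier[OF assms(2) _ _] assms(1,4) mem_Lambda_iff by (meson less_imp_le)
qed

end
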